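(* Let $p$ be a prime, $l\ge 0$ an integer, $q=p^l$, and let $k$ be an integer with $0\le k\le q/2$. For $n\ge0$ let $P(n)$ denote the $n\times n$ matrix with entries $\binom{i+j}{i}$, $0\le i,j<n$, and let $\chi_n(t)=\det(tI(n)-P(n))$. Then $$\chi_{q-k}(t)\equiv (t^2+t+1)^{(q-\epsilon(q))/3-k}\,(t-1)^{(q+2\epsilon(q))/3-k}\,\det(t^2I(k)+P(k))\pmod p,$$ where $\epsilon(q)\in\{-1,0,1\}$ is defined by $\epsilon(q)\equiv q\pmod 3$.
   Context: $I(n)$ is the $n\times n$ identity matrix; the determinant of a $0\times 0$ matrix is $1$. The congruence is coefficientwise in $\mathbf{Z}[t]$. *)

theory Defs
  imports "Jordan_Normal_Form.Determinant" "HOL-Number_Theory.Cong"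
begin

definition Pmat :: "nat \<Rightarrow> int mat" where
  "Pmat n = mat n n (\<lambda>(i, j). int ((i + j) choose i))"

definition chi :: "nat \<Rightarrow> int poly" where
  "chi n = det ([:0, 1:] \<cdot>\<^sub>m 1\<^sub>m n - map_mat (\<lambda>a. [:a:]) (Pmat n))"

definition Dpoly :: "nat \<Rightarrow> int poly" where
  "Dpoly k = det ([:0, 0, 1:] \<cdot>\<^sub>m 1\<^sub>m k + map_mat (\<lambda>a. [:a:]) (Pmat k))"

definition eps :: "nat \<Rightarrow> int" where
  "eps q = (if q mod 3 = 0 then 0 else if q mod 3 = 1 then 1 else -1)"

end

theory Submission
  imports Defs "HOL-Computational_Algebra.Polynomial_Factorial" "Jordan_Normal_Form.Char_Poly"
begin

text \<open>
  Let A(n) be the n x n matrix with entries (-1)^(n-1+j) C(n-1-i, j). Two alternating binomial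
  identities give A(n)^3 = 1, so the characteristic polynomial of A(n), monic of degree n and
  dividing (t^3 - 1)^n, is (t - 1)^x (t^2 + t + 1)^y with x + 2y = n and x - y = tr A(n) = eps(n).
  For q a power of p, A(q) is congruent to P(q) modulo p. Jacobi's complementary minor formula for
  (tI - A)(t^2 I + tA + A^2) = (t^3 - 1) I relates the leading (q-k)-minor of tI - A, which is
  chi_(q-k) modulo p, to the trailing k-minor of t^2 I + tA + A^2, which for 2k <= q is
  det(t^2 I + P(k)) modulo p. Cancelling the common monic factor gives the congruence.
\<close>

abbreviation cyclotomic1 :: "int poly" where
  "cyclotomic1 \<equiv> [:-1, 1:]"

abbreviation cyclotomic3 :: "int poly" where
  "cyclotomic3 \<equiv> [:1, 1, 1:]"

section \<open>Alternating binomial sums\<close>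

lemma choose_alternating_convolution:
  "i \<le> N \<Longrightarrow> j \<le> N \<Longrightarrow>
    (\<Sum>m\<le>i. (-1)^m * int (i choose m) * int ((N - m) choose j)) = int ((N - i) choose (N - j))"
proof (induction i arbitrary: N j)
  case 0
  then show ?case by (simp add: binomial_symmetric[symmetric])
next
  case (Suc i)
  show ?case
  proof (cases "j = N")
    case True
    have "(\<Sum>m\<le>Suc i. (-1)^m * int (Suc i choose m) * int ((N - m) choose j)) =
          (\<Sum>m\<le>Suc i. if m = 0 then 1 else 0)"
      using Suc.prems by (intro sum.cong) (auto simp: True binomial_eq_0)
    then show ?thesis using True by simp
  next
    case False
    define h where "h N' m = (-1)^m * int (i choose m) * int ((N' - m) choose j)" for N' m
    have "(\<Sum>m\<le>Suc i. (-1)^m * int (Suc i choose m) * int ((N - m) choose j)) =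
       int (N choose j) + (\<Sum>m\<le>i. (-1)^Suc m * int (Suc i choose Suc m) * int ((N - Suc m) choose j))"
      unfolding sum.atMost_Suc_shift by simp
    also have "\<dots> = int (N choose j)
        + (\<Sum>m\<le>i. (-1)^Suc m * int (i choose Suc m) * int ((N - Suc m) choose j) - h (N - 1) m)"
      by (intro arg_cong2[where f="(+)"] refl sum.cong) (simp_all add: h_def algebra_simps)
    also have "\<dots> = int (N choose j)
        + (\<Sum>m\<le>i. (-1)^Suc m * int (i choose Suc m) * int ((N - Suc m) choose j))
        - (\<Sum>m\<le>i. h (N - 1) m)"
      by (simp only: sum_subtractf add_diff_eq)
    also have "int (N choose j)
        + (\<Sum>m\<le>i. (-1)^Suc m * int (i choose Suc m) * int ((N - Suc m) choose j))
       = (\<Sum>m\<le>Suc i. h N m)"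
      unfolding h_def sum.atMost_Suc_shift by simp
    also have "(\<Sum>m\<le>Suc i. h N m) = int ((N - i) choose (N - j))"
      using Suc.IH[of N j] Suc.prems by (simp add: h_def)
    also have "(\<Sum>m\<le>i. h (N - 1) m) = int ((N - 1 - i) choose (N - 1 - j))"
      using Suc.IH[of "N - 1" j] Suc.prems False by (simp add: h_def)
    also have "int ((N - i) choose (N - j)) - int ((N - 1 - i) choose (N - 1 - j))
        = int ((N - Suc i) choose (N - j))"
    proof -
      have "N - i = Suc (N - Suc i)" "N - j = Suc (N - 1 - j)"
        using Suc.prems False by auto
      then show ?thesis by simp
    qed
    finally show ?thesis .
  qed
qed

lemma choose_alternating_inversion:
  "(\<Sum>m\<le>a. (-1)^m * int (a choose m) * int (m choose b)) = (if a = b then (-1)^b else 0)"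
proof (induction a arbitrary: b)
  case 0
  then show ?case by auto
next
  case (Suc a)
  define S where "S b = (\<Sum>m\<le>a. (-1)^m * int (a choose m) * int (m choose b))" for b
  show ?case
  proof (cases b)
    case 0
    have "(\<Sum>m\<le>Suc a. (-1)^m * int (Suc a choose m)) = 0"
      using choose_alternating_sum[of "Suc a", where 'a=int] by (simp add: mult.commute)
    then show ?thesis using 0 by simp
  next
    case (Suc b')
    have "(\<Sum>m\<le>Suc a. (-1)^m * int (Suc a choose m) * int (m choose b)) =
       (\<Sum>m\<le>a. (-1)^Suc m * int (Suc a choose Suc m) * int (Suc m choose b))"
      using Suc unfolding sum.atMost_Suc_shift by simp
    also have "\<dots> = (\<Sum>m\<le>a. (-1)^Suc m * int (a choose m) * int (Suc m choose b))
        + (\<Sum>m\<le>a. (-1)^Suc m * int (a choose Suc m) * int (Suc m choose b))"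
      unfolding sum.distrib[symmetric] by (intro sum.cong refl) (simp add: algebra_simps)
    also have "(\<Sum>m\<le>a. (-1)^Suc m * int (a choose Suc m) * int (Suc m choose b))
       = (\<Sum>m\<le>Suc a. (-1)^m * int (a choose m) * int (m choose b))"
      using Suc unfolding sum.atMost_Suc_shift by simp
    also have "\<dots> = S b"
      unfolding S_def by simp
    also have "(\<Sum>m\<le>a. (-1)^Suc m * int (a choose m) * int (Suc m choose b)) =
        (\<Sum>m\<le>a. - ((-1)^m * int (a choose m) * int (m choose b')) - (-1)^m * int (a choose m) * int (m choose b))"
      using Suc by (intro sum.cong refl) (simp add: algebra_simps)
    also have "\<dots> = - S b' - S b"
      unfolding S_def by (simp only: sum_subtractf sum_negf)
    finally show ?thesis using Suc.IH[of b'] Suc unfolding S_def by simp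
  qed
qed

definition alternating_diagonal_sum :: "nat \<Rightarrow> int" where
  "alternating_diagonal_sum N = (\<Sum>i\<le>N. (-1)^i * int ((N - i) choose i))"

lemma alternating_diagonal_sum_Suc_Suc:
  "alternating_diagonal_sum (Suc (Suc N)) = alternating_diagonal_sum (Suc N) - alternating_diagonal_sum N"
proof -
  define g where "g = (\<Sum>i\<le>N. (-1)^i * int ((N - i) choose Suc i))"
  have "alternating_diagonal_sum (Suc N) = (\<Sum>i\<le>Suc N. (-1)^i * int ((Suc N - i) choose i))"
    by (simp add: alternating_diagonal_sum_def)
  also have "\<dots> = 1 + (\<Sum>i\<le>N. (-1)^Suc i * int ((Suc N - Suc i) choose Suc i))"
    unfolding sum.atMost_Suc_shift by simp
  also have "\<dots> = 1 - g" by (simp add: g_def sum_negf)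
  finally have g: "alternating_diagonal_sum (Suc N) = 1 - g" .
  have "alternating_diagonal_sum (Suc (Suc N))
      = (\<Sum>i\<le>Suc (Suc N). (-1)^i * int ((Suc (Suc N) - i) choose i))"
    by (simp add: alternating_diagonal_sum_def)
  also have "\<dots> = 1 + (\<Sum>i\<le>Suc N. (-1)^Suc i * int ((Suc N - i) choose Suc i))"
    unfolding sum.atMost_Suc_shift by simp
  also have "\<dots> = 1 + (\<Sum>i\<le>N. (-1)^Suc i * int ((Suc N - i) choose Suc i))"
    by simp
  also have "\<dots> = 1 + (\<Sum>i\<le>N. (-1)^Suc i * int ((N - i) choose Suc i) + (-1)^Suc i * int ((N - i) choose i))"
    by (intro arg_cong2[where f="(+)"] refl sum.cong) (simp_all add: Suc_diff_le algebra_simps)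
  also have "\<dots> = 1 - g - alternating_diagonal_sum N"
    by (simp add: sum.distrib g_def alternating_diagonal_sum_def sum_negf sum_subtractf)
  finally show ?thesis using g by simp
qed

lemma eps_Suc_Suc: "eps (Suc (Suc n)) = - eps (Suc n) - eps n"
  unfolding eps_def by presburger

lemma alternating_diagonal_sum_eq_eps: "(-1)^N * alternating_diagonal_sum N = eps (Suc N)"
proof (induction N rule: induct_nat_012)
  case (ge2 n)
  have "(-1)^Suc (Suc n) * alternating_diagonal_sum (Suc (Suc n))
      = - ((-1)^Suc n * alternating_diagonal_sum (Suc n)) - (-1)^n * alternating_diagonal_sum n"
    by (simp add: alternating_diagonal_sum_Suc_Suc algebra_simps)
  then show ?case using ge2 eps_Suc_Suc[of "Suc n"] by simp
qed (simp_all add: alternating_diagonal_sum_def eps_def)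

section \<open>Binomial coefficients modulo a prime power\<close>

lemma prime_power_dvd_choose:
  assumes p: "prime p" and q: "q = p ^ l" and j: "0 < j" "j < q"
  shows "p dvd (q choose j)"
proof (rule ccontr)
  assume "\<not> p dvd (q choose j)"
  then have "coprime q (q choose j)"
    using p q by (metis coprime_power_left_iff prime_imp_coprime)
  moreover have "q dvd j * (q choose j)"
    using j times_binomial_minus1_eq[of j q] by simp
  ultimately have "q dvd j" using coprime_dvd_mult_left_iff by blast
  with j show False by (simp add: nat_dvd_not_less)
qed

lemma minus_one_power_pred_prime_power_cong:
  assumes p: "prime p" and q: "q = p ^ l"
  shows "[(-1::int)^(q - 1) = 1] (mod int p)"
proof (cases "even q")
  case True
  then have "2 dvd p" using q prime_dvd_power_nat[of 2 p l] two_is_prime_nat by auto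
  then have "p = 2" using p unfolding prime_nat_iff by auto
  then show ?thesis by (simp add: cong_iff_dvd_diff)
next
  case False
  then show ?thesis by simp
qed

text \<open>For i = 0 this is (-1)^j C(q-1, j) = 1 modulo p, as p divides C(q, j) for 0 < j < q;
  Pascal's rule then propagates the congruence in i.\<close>

lemma prime_power_choose_reflect_cong:
  assumes p: "prime p" and q: "q = p ^ l"
  shows "i < q \<Longrightarrow> j < q \<Longrightarrow> [(-1)^j * int ((q - 1 - i) choose j) = int ((i + j) choose j)] (mod int p)"
proof (induction i arbitrary: j)
  case 0
  then show ?case
  proof (induction j)
    case (Suc j)
    have "q = Suc (q - 1)" using Suc by simp
    then have "q choose Suc j = ((q - 1) choose j) + ((q - 1) choose Suc j)"
      by (metis binomial_Suc_Suc)
    then have e: "(-1)^Suc j * int ((q - 1) choose Suc j)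
        = (-1)^Suc j * int (q choose Suc j) + (-1)^j * int ((q - 1) choose j)"
      by (simp add: algebra_simps)
    have "[int (q choose Suc j) = 0] (mod int p)"
      using prime_power_dvd_choose[OF p q, of "Suc j"] Suc.prems by (simp add: cong_0_iff)
    then have "[(-1)^Suc j * int (q choose Suc j) + (-1)^j * int ((q - 1) choose j)
        = (-1)^Suc j * 0 + 1] (mod int p)"
      using Suc.IH Suc.prems by (intro cong_add cong_mult cong_refl) auto
    then show ?case using e by simp
  qed simp
next
  case (Suc i)
  note outer = Suc.IH
  from Suc.prems show ?case
  proof (induction j)
    case (Suc j)
    define a where "a = q - 1 - Suc i"
    have a: "q - 1 - i = Suc a" using Suc.prems a_def by simp
    have "[(-1)^Suc j * int (Suc a choose Suc j) + (-1)^j * int (a choose j) =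
           int ((i + Suc j) choose Suc j) + int ((Suc i + j) choose j)] (mod int p)"
      using outer[of "Suc j"] Suc.IH Suc.prems a unfolding a_def by (intro cong_add) simp_all
    then show ?case unfolding a_def[symmetric] by (simp add: algebra_simps)
  qed simp
qed

section \<open>The twisted Pascal matrix\<close>

definition twisted_pascal_mat :: "nat \<Rightarrow> int mat" where
  "twisted_pascal_mat n = mat n n (\<lambda>(i, j). (-1)^(n - 1) * (-1)^j * int ((n - 1 - i) choose j))"

definition twisted_pascal_sq_mat :: "nat \<Rightarrow> int mat" where
  "twisted_pascal_sq_mat n = mat n n (\<lambda>(i, j). (-1)^j * int (i choose (n - 1 - j)))"

lemma twisted_pascal_mat_dim [simp]:
  "dim_row (twisted_pascal_mat n) = n" "dim_col (twisted_pascal_mat n) = n"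
  by (simp_all add: twisted_pascal_mat_def)

lemma twisted_pascal_sq_mat_dim [simp]:
  "dim_row (twisted_pascal_sq_mat n) = n" "dim_col (twisted_pascal_sq_mat n) = n"
  by (simp_all add: twisted_pascal_sq_mat_def)

lemma twisted_pascal_mat_carrier [simp]: "twisted_pascal_mat n \<in> carrier_mat n n"
  by (rule carrier_matI) simp_all

lemma twisted_pascal_sq_mat_carrier [simp]: "twisted_pascal_sq_mat n \<in> carrier_mat n n"
  by (rule carrier_matI) simp_all

lemma twisted_pascal_mat_square:
  "twisted_pascal_mat n * twisted_pascal_mat n = twisted_pascal_sq_mat n"
proof (rule eq_matI)
  fix i j assume "i < dim_row (twisted_pascal_sq_mat n)" "j < dim_col (twisted_pascal_sq_mat n)"
  then have i: "i < n" and j: "j < n" by (auto simp: twisted_pascal_sq_mat_def)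
  define a where "a = n - 1 - i"
  have "(twisted_pascal_mat n * twisted_pascal_mat n) $$ (i, j)
      = (\<Sum>l<n. (-1)^j * ((-1)^l * int (a choose l) * int ((n - 1 - l) choose j)))"
    using i j by (auto simp: twisted_pascal_mat_def scalar_prod_def a_def atLeast0LessThan
        intro!: sum.cong)
  also have "\<dots> = (-1)^j * (\<Sum>l\<le>a. (-1)^l * int (a choose l) * int ((n - 1 - l) choose j))"
    unfolding sum_distrib_left[symmetric] using i
    by (intro arg_cong[where f="(*) _"] sum.mono_neutral_right) (auto simp: a_def)
  also have "\<dots> = (-1)^j * int ((n - 1 - a) choose (n - 1 - j))"
    using choose_alternating_convolution[of a "n - 1" j] i j by (simp add: a_def)
  also have "\<dots> = twisted_pascal_sq_mat n $$ (i, j)"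
    using i j by (simp add: twisted_pascal_sq_mat_def a_def)
  finally show "(twisted_pascal_mat n * twisted_pascal_mat n) $$ (i, j) = twisted_pascal_sq_mat n $$ (i, j)" .
qed (auto simp: twisted_pascal_mat_def twisted_pascal_sq_mat_def)

lemma twisted_pascal_mat_mult_sq: "twisted_pascal_mat n * twisted_pascal_sq_mat n = 1\<^sub>m n"
proof (rule eq_matI)
  fix i j assume "i < dim_row (1\<^sub>m n :: int mat)" "j < dim_col (1\<^sub>m n :: int mat)"
  then have i: "i < n" and j: "j < n" by auto
  define a where "a = n - 1 - i"
  define b where "b = n - 1 - j"
  have "(twisted_pascal_mat n * twisted_pascal_sq_mat n) $$ (i, j)
      = (\<Sum>l<n. ((-1)^(n - 1) * (-1)^j) * ((-1)^l * int (a choose l) * int (l choose b)))"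
    using i j by (auto simp: twisted_pascal_mat_def twisted_pascal_sq_mat_def scalar_prod_def
        a_def b_def atLeast0LessThan algebra_simps intro!: sum.cong)
  also have "\<dots> = ((-1)^(n - 1) * (-1)^j) * (\<Sum>l\<le>a. (-1)^l * int (a choose l) * int (l choose b))"
    unfolding sum_distrib_left[symmetric] using i
    by (intro arg_cong[where f="(*) _"] sum.mono_neutral_right) (auto simp: a_def)
  also have "\<dots> = ((-1)^(n - 1) * (-1)^j) * (if a = b then (-1)^b else 0)"
    by (simp add: choose_alternating_inversion)
  also have "\<dots> = 1\<^sub>m n $$ (i, j)"
  proof -
    have "(-1::int)^j * (-1)^b = (-1)^(n - 1)" using j by (simp add: b_def flip: power_add)
    moreover have "(a = b) = (i = j)" using i j by (auto simp: a_def b_def)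
    ultimately show ?thesis using i j by (auto simp: mult.assoc)
  qed
  finally show "(twisted_pascal_mat n * twisted_pascal_sq_mat n) $$ (i, j) = 1\<^sub>m n $$ (i, j)" .
qed (auto simp: twisted_pascal_mat_def twisted_pascal_sq_mat_def)

lemma twisted_pascal_mat_trace:
  assumes "0 < n"
  shows "(\<Sum>i<n. twisted_pascal_mat n $$ (i, i)) = eps n"
proof -
  have "(\<Sum>i<n. twisted_pascal_mat n $$ (i, i)) = (-1)^(n - 1) * alternating_diagonal_sum (n - 1)"
    using assms unfolding alternating_diagonal_sum_def sum_distrib_left
    by (auto simp: twisted_pascal_mat_def lessThan_Suc_atMost[symmetric] mult.assoc
        intro!: sum.cong)
  also have "\<dots> = eps n" using alternating_diagonal_sum_eq_eps[of "n - 1"] assms by simp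
  finally show ?thesis .
qed

lemma twisted_pascal_mat_cong:
  assumes "prime p" "q = p ^ l" "i < q" "j < q"
  shows "[twisted_pascal_mat q $$ (i, j) = int ((i + j) choose i)] (mod int p)"
proof -
  have "[(-1)^(q - 1) * ((-1)^j * int ((q - 1 - i) choose j)) = 1 * int ((i + j) choose j)] (mod int p)"
    using cong_mult[OF minus_one_power_pred_prime_power_cong[OF assms(1,2)]
        prime_power_choose_reflect_cong[OF assms]] .
  moreover have "(i + j) choose j = (i + j) choose i" using binomial_symmetric[of j "i + j"] by simp
  ultimately show ?thesis using assms(3,4) by (simp add: twisted_pascal_mat_def mult.assoc)
qed

lemma twisted_pascal_sq_mat_reverse:
  assumes "i < n" "j < n"
  shows "twisted_pascal_sq_mat n $$ (n - 1 - i, n - 1 - j) = twisted_pascal_mat n $$ (i, j)"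
proof -
  have "(-1::int)^(n - 1) = (-1)^(n - 1 - j) * (-1)^j"
    using assms(2) by (simp flip: power_add)
  then have "(-1::int)^(n - 1 - j) = (-1)^(n - 1) * (-1)^j" by simp
  then show ?thesis using assms by (simp add: twisted_pascal_mat_def twisted_pascal_sq_mat_def)
qed

lemma twisted_pascal_mat_lower_right_zero:
  assumes "2 * k \<le> q" "i < k" "j < k"
  shows "twisted_pascal_mat q $$ (q - 1 - i, q - 1 - j) = 0"
  using assms by (simp add: twisted_pascal_mat_def binomial_eq_0)


lemma const_poly_dvd_mult_monic_cancel:
  fixes F H :: "int poly"
  assumes "[:c:] dvd F * H" and "monic H"
  shows "[:c:] dvd F"
proof -
  have "content H dvd 1" using content_dvd_coeff[of H "degree H"] assms(2) by simp
  then have "content H = 1" using is_unit_content_iff by blast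
  then show ?thesis using assms(1) by (simp add: const_poly_dvd_iff_dvd_content content_mult)
qed

lemma prime_cyclotomic1: "prime cyclotomic1"
  unfolding prime_def using prime_elem_linear_poly[of 1 "-1::int"]
  by (simp add: normalize_poly_def one_pCons[symmetric])

lemma irreducible_cyclotomic3: "irreducible cyclotomic3"
proof (rule irreducibleI)
  fix a b :: "int poly" assume ab: "cyclotomic3 = a * b"
  then have "a \<noteq> 0" "b \<noteq> 0" by auto
  moreover have "degree (a * b) = 2" unfolding ab[symmetric] by simp
  ultimately have deg: "degree a + degree b = 2" by (simp add: degree_mult_eq)
  have "coeff a 0 * coeff b 0 = 1" using arg_cong[OF ab, of "\<lambda>f. coeff f 0"] by (simp add: coeff_mult)
  then have units: "is_unit (coeff a 0)" "is_unit (coeff b 0)"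
    by (metis dvd_triv_left dvd_triv_right)+
  consider "degree a = 0" | "degree b = 0" | "degree a = 1" "degree b = 1"
    using deg by linarith
  then show "is_unit a \<or> is_unit b"
  proof cases
    case 1
    then show ?thesis using units by (metis degree_eq_zeroE is_unit_const_poly_iff coeff_pCons_0)
  next
    case 2
    then show ?thesis using units by (metis degree_eq_zeroE is_unit_const_poly_iff coeff_pCons_0)
  next
    case 3
    then obtain a0 a1 b0 b1 where A: "a = [:a0, a1:]" and B: "b = [:b0, b1:]"
      by (metis degree1_coeffs)
    have "a0 * b0 = 1" "a0 * b1 + a1 * b0 = 1" "a1 * b1 = 1"
      using ab A B by (simp_all add: algebra_simps)
    then show ?thesis by (auto simp: zmult_eq_1_iff)
  qed
qed (simp_all add: is_unit_poly_iff)

lemma prime_cyclotomic3: "prime cyclotomic3"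
  unfolding prime_def using irreducible_imp_prime_poly[OF irreducible_cyclotomic3]
  by (simp add: normalize_poly_def one_pCons[symmetric])

lemma monic_dvd_prime_powers:
  fixes f u v :: "int poly"
  assumes u: "prime u" "monic u" and v: "prime v" "monic v"
    and f: "monic f" "f dvd u ^ N * v ^ N"
  obtains x y where "f = u ^ x * v ^ y"
proof -
  have "f \<noteq> 0" using f by auto
  then obtain g where fg: "f = u ^ multiplicity u f * g" and "\<not> u dvd g"
    using multiplicity_decompose' prime_imp_prime_elem[OF u(1)] prime_elem_not_unit by metis
  then have "coprime (u ^ N) g"
    using u(1) by (simp add: prime_elem_imp_coprime prime_imp_prime_elem)
  moreover have "g dvd u ^ N * v ^ N" using f(2) fg by (metis dvd_mult_right)
  ultimately have "g dvd v ^ N" using coprime_dvd_mult_right_iff coprime_commute by metis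
  then obtain y where y: "normalize g = normalize (v ^ y)"
    using divides_primepow_weak[OF v(1)] by metis
  have "lead_coeff f = lead_coeff (u ^ multiplicity u f * g)" using fg by (rule arg_cong)
  then have "lead_coeff g = 1" using f(1) u(2) by (simp add: lead_coeff_mult lead_coeff_power)
  then have "g = v ^ y" using y v(2) by (simp add: normalize_poly_def lead_coeff_power one_pCons[symmetric])
  with fg show thesis using that by blast
qed

lemma degree_cyclotomic_powers: "degree (cyclotomic1 ^ x * cyclotomic3 ^ y) = x + 2 * y"
  by (simp add: degree_mult_eq degree_power_eq)

lemma coeff_1_power:
  fixes f :: "'a :: comm_ring_1 poly"
  assumes "coeff f 0 = 1"
  shows "coeff (f ^ n) 1 = of_nat n * coeff f 1"
proof (induction n)
  case (Suc n)
  have "coeff (f ^ Suc n) 1 = coeff f 0 * coeff (f ^ n) 1 + coeff f 1 * coeff (f ^ n) 0"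
    by (simp add: coeff_mult numeral_2_eq_2 atMost_Suc)
  then show ?case using Suc assms by (simp add: coeff_0_power algebra_simps)
qed simp

text \<open>Read off as the linear coefficient of the reflected polynomial (1 - t)^x (1 + t + t^2)^y.\<close>

lemma coeff_cyclotomic_powers_pred_degree:
  assumes "0 < x + 2 * y"
  shows "coeff (cyclotomic1 ^ x * cyclotomic3 ^ y) (x + 2 * y - 1) = int y - int x"
proof -
  let ?F = "cyclotomic1 ^ x * cyclotomic3 ^ y"
  have "reflect_poly cyclotomic1 = [:1, -1:]" "reflect_poly cyclotomic3 = cyclotomic3"
    by (simp_all add: reflect_poly_def)
  then have "reflect_poly ?F = [:1, -1:] ^ x * cyclotomic3 ^ y"
    by (simp add: reflect_poly_mult reflect_poly_power)
  then have "coeff (reflect_poly ?F) 1 = int y - int x"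
    using coeff_1_power[of "[:1, -1:]" x] coeff_1_power[of cyclotomic3 y]
    by (simp add: coeff_mult numeral_2_eq_2 atMost_Suc coeff_0_power)
  moreover have "coeff (reflect_poly ?F) 1 = coeff ?F (degree ?F - 1)"
    using assms by (simp add: coeff_reflect_poly degree_cyclotomic_powers)
  ultimately show ?thesis by (simp add: degree_cyclotomic_powers)
qed

lemma const_poly_dvd_cancel_common_powers:
  fixes f g C D :: "int poly"
  assumes "monic f" "monic g" and "[:c:] dvd f ^ x * g ^ y * D - C * (f * g) ^ k"
  shows "[:c:] dvd C * g ^ nat (int k - int y) * f ^ nat (int k - int x)
                   - g ^ nat (int y - int k) * f ^ nat (int x - int k) * D"
proof -
  define H where "H = g ^ min y k * f ^ min x k"
  have exponents: "nat (int k - int z) + min z k = k" "nat (int z - int k) + min z k = z" for z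
    by auto
  have pow: "g ^ nat (int k - int y) * g ^ min y k = g ^ k" "f ^ nat (int k - int x) * f ^ min x k = f ^ k"
    "g ^ nat (int y - int k) * g ^ min y k = g ^ y" "f ^ nat (int x - int k) * f ^ min x k = f ^ x"
    unfolding power_add[symmetric] exponents by simp_all
  have "(C * g ^ nat (int k - int y) * f ^ nat (int k - int x)
          - g ^ nat (int y - int k) * f ^ nat (int x - int k) * D) * H
        = C * (g ^ nat (int k - int y) * g ^ min y k) * (f ^ nat (int k - int x) * f ^ min x k)
          - (g ^ nat (int y - int k) * g ^ min y k) * (f ^ nat (int x - int k) * f ^ min x k) * D"
    unfolding H_def by (simp only: left_diff_distrib right_diff_distrib mult_ac)
  also have "\<dots> = - (f ^ x * g ^ y * D - C * (f * g) ^ k)"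
    unfolding pow by (simp add: power_mult_distrib algebra_simps)
  finally have "[:c:] dvd (C * g ^ nat (int k - int y) * f ^ nat (int k - int x)
          - g ^ nat (int y - int k) * f ^ nat (int x - int k) * D) * H"
    using assms(3) by (simp only: dvd_minus_iff)
  moreover have "monic H" using assms(1,2) by (simp add: H_def lead_coeff_mult lead_coeff_power)
  ultimately show ?thesis by (rule const_poly_dvd_mult_monic_cancel)
qed

section \<open>Determinants and characteristic polynomials\<close>

lemma char_poly_altdef:
  assumes "A \<in> carrier_mat n n"
  shows "char_poly A = det ([:0, 1:] \<cdot>\<^sub>m 1\<^sub>m n - map_mat (\<lambda>a. [:a:]) A)"
proof -
  have "char_poly_matrix A = [:0, 1:] \<cdot>\<^sub>m 1\<^sub>m n - map_mat (\<lambda>a. [:a:]) A"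
    using assms by (intro eq_matI) (auto simp: char_poly_matrix_def)
  then show ?thesis by (simp add: char_poly_def)
qed

lemma coeff_prod_monic_linear:
  fixes c :: "nat \<Rightarrow> 'a :: comm_ring_1"
  shows "degree (\<Prod>i = 0..<n. [:- c i, 1:]) \<le> n \<and> coeff (\<Prod>i = 0..<n. [:- c i, 1:]) n = 1 \<and>
    (0 < n \<longrightarrow> coeff (\<Prod>i = 0..<n. [:- c i, 1:]) (n - 1) = - (\<Sum>i<n. c i))"
proof (induction n)
  case (Suc n)
  define P where "P = (\<Prod>i = 0..<n. [:- c i, 1:])"
  have P: "degree P \<le> n" "coeff P n = 1" "0 < n \<Longrightarrow> coeff P (n - 1) = - (\<Sum>i<n. c i)"
    using Suc by (simp_all add: P_def)
  have "(\<Prod>i = 0..<Suc n. [:- c i, 1:]) = smult (- c n) P + pCons 0 P"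
    by (simp add: P_def mult_pCons_right)
  moreover have "degree (smult (- c n) P + pCons 0 P) \<le> Suc n"
    using P(1) by (intro degree_add_le) (auto simp: degree_pCons_eq_if intro: le_trans[OF degree_smult_le])
  moreover have "coeff P (Suc n) = 0" using P(1) by (simp add: coeff_eq_0)
  moreover have "coeff (pCons 0 P) n = - (\<Sum>i<n. c i)"
    using P(3) by (cases n) simp_all
  ultimately show ?case using P(2) by simp
qed simp

lemma card_fixed_points_le:
  assumes p: "p permutes {0..<n}" and "p \<noteq> id"
  shows "card {i \<in> {0..<n}. p i = i} + 2 \<le> n"
proof -
  obtain i where i: "p i \<noteq> i" using assms(2) by (auto simp: fun_eq_iff)
  then have "i \<in> {0..<n}" using p by (meson permutes_not_in)
  then have in_range: "i \<in> {0..<n}" "p i \<in> {0..<n}" using p by (simp_all add: permutes_in_image)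
  have "p (p i) \<noteq> p i" using i permutes_inj[OF p] by (metis injD)
  then have "{j \<in> {0..<n}. p j = j} \<subseteq> {0..<n} - {i, p i}" using i by auto
  then have "card {j \<in> {0..<n}. p j = j} \<le> card ({0..<n} - {i, p i})" by (intro card_mono) auto
  also have "\<dots> = n - 2" using in_range i by (subst card_Diff_subset) auto
  finally show ?thesis using in_range i by auto
qed

text \<open>Only the identity permutation contributes to the two top coefficients of the Leibniz
  expansion, since every other permutation moves at least two indices.\<close>

lemma coeff_char_poly_pred_degree:
  fixes A :: "'a :: comm_ring_1 mat"
  assumes A: "A \<in> carrier_mat n n" and n: "0 < n"
  shows "coeff (char_poly A) (n - 1) = - (\<Sum>i<n. A $$ (i, i))"
proof -
  let ?M = "char_poly_matrix A"
  let ?f = "\<lambda>p. signof p * (\<Prod>i = 0..<n. ?M $$ (i, p i))"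
  have M: "?M $$ (i, j) = (if i = j then [:- A $$ (i, i), 1:] else [:- A $$ (i, j):])"
    if "i < n" "j < n" for i j
    using that A by (auto simp: char_poly_matrix_def)
  have low: "coeff (?f p) (n - 1) = 0" if p: "p permutes {0..<n}" "p \<noteq> id" for p
  proof -
    have "degree (\<Prod>i = 0..<n. ?M $$ (i, p i)) \<le> (\<Sum>i = 0..<n. (degree \<circ> (\<lambda>i. ?M $$ (i, p i))) i)"
      by (rule degree_prod_sum_le) simp
    also have "\<dots> \<le> (\<Sum>i = 0..<n. if p i = i then 1 else 0)"
      by (intro sum_mono) (use p in \<open>auto simp: M permutes_in_image\<close>)
    also have "\<dots> = card {i \<in> {0..<n}. p i = i}"
      by (simp add: sum.If_cases Int_def conj_commute)
    finally show ?thesis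
      using card_fixed_points_le[OF p] by (intro coeff_eq_0) simp
  qed
  have "coeff (char_poly A) (n - 1) = (\<Sum>p \<in> {p. p permutes {0..<n}}. coeff (?f p) (n - 1))"
    unfolding char_poly_def det_def'[OF char_poly_matrix_closed[OF A]] by (simp add: coeff_sum)
  also have "\<dots> = coeff (?f id) (n - 1) + (\<Sum>p \<in> {p. p permutes {0..<n}} - {id}. coeff (?f p) (n - 1))"
    by (rule sum.remove) (simp_all add: finite_permutations permutes_id)
  also have "(\<Sum>p \<in> {p. p permutes {0..<n}} - {id}. coeff (?f p) (n - 1)) = 0"
    using low by (intro sum.neutral) blast
  also have "coeff (?f id) (n - 1) + 0 = coeff (\<Prod>i = 0..<n. [:- A $$ (i, i), 1:]) (n - 1)"
    by (simp add: M)
  also have "\<dots> = - (\<Sum>i<n. A $$ (i, i))"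
    using coeff_prod_monic_linear[of "\<lambda>i. A $$ (i, i)" n] n by simp
  finally show ?thesis .
qed

lemma dvd_prod_diff:
  fixes f g :: "'b \<Rightarrow> 'a :: comm_ring_1"
  assumes "finite S" "\<And>i. i \<in> S \<Longrightarrow> d dvd f i - g i"
  shows "d dvd prod f S - prod g S"
  using assms
proof (induction S rule: finite_induct)
  case (insert a S)
  have "prod f (insert a S) - prod g (insert a S) = (f a - g a) * prod f S + g a * (prod f S - prod g S)"
    using insert by (simp add: algebra_simps)
  then show ?case using insert by simp
qed simp

lemma dvd_det_diff:
  fixes M N :: "'a :: comm_ring_1 mat"
  assumes M: "M \<in> carrier_mat n n" and N: "N \<in> carrier_mat n n"
    and entries: "\<And>i j. i < n \<Longrightarrow> j < n \<Longrightarrow> d dvd M $$ (i, j) - N $$ (i, j)"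
  shows "d dvd det M - det N"
proof -
  have "det M - det N = (\<Sum>p \<in> {p. p permutes {0..<n}}.
      signof p * ((\<Prod>i = 0..<n. M $$ (i, p i)) - (\<Prod>i = 0..<n. N $$ (i, p i))))"
    unfolding det_def'[OF M] det_def'[OF N] by (simp add: sum_subtractf algebra_simps)
  also have "d dvd \<dots>"
    using entries by (intro dvd_sum dvd_mult dvd_prod_diff) (auto simp: permutes_in_image)
  finally show ?thesis .
qed

lemma det_permute_rows_cols:
  fixes A :: "'a :: comm_ring_1 mat"
  assumes A: "A \<in> carrier_mat n n" and p: "p permutes {0..<n}"
  shows "det (mat n n (\<lambda>(i, j). A $$ (p i, p j))) = det A"
proof -
  let ?B = "mat n n (\<lambda>(i, j). A $$ (i, p j))"
  have "mat n n (\<lambda>(i, j). A $$ (p i, p j)) = mat n n (\<lambda>(i, j). ?B $$ (p i, j))"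
    using p by (intro eq_matI) (auto simp: permutes_in_image)
  then have "det (mat n n (\<lambda>(i, j). A $$ (p i, p j))) = signof p * det ?B"
    using det_permute_rows[OF _ p, of ?B] by simp
  also have "det ?B = det (transpose_mat ?B)" using det_transpose[of ?B n] by simp
  also have "transpose_mat ?B = mat n n (\<lambda>(i, j). transpose_mat A $$ (p i, j))"
    using A p by (intro eq_matI) (auto simp: permutes_in_image)
  also have "det \<dots> = signof p * det A"
    using det_permute_rows[OF _ p, of "transpose_mat A"] det_transpose[OF A] A by simp
  finally show ?thesis by (cases p rule: sign_cases) simp_all
qed

lemma reverse_permutes: "(\<lambda>i::nat. if i < n then n - 1 - i else i) permutes {0..<n}"
proof (rule bij_imp_permutes)
  show "bij_betw (\<lambda>i. if i < n then n - 1 - i else i) {0..<n} {0..<n}"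
    by (rule bij_betw_byWitness[where f' = "\<lambda>i. n - 1 - i"]) auto
qed simp

text \<open>Replacing the first m columns of C by those of the identity makes the product with B
  block lower triangular.\<close>

lemma jacobi_complementary_minor:
  fixes B C :: "'a :: idom mat"
  assumes B: "B \<in> carrier_mat (m + k) (m + k)" and C: "C \<in> carrier_mat (m + k) (m + k)"
    and BC: "B * C = c \<cdot>\<^sub>m 1\<^sub>m (m + k)"
  shows "det B * det (mat k k (\<lambda>(i, j). C $$ (m + i, m + j)))
         = det (mat m m (\<lambda>(i, j). B $$ (i, j))) * c ^ k"
proof -
  define M where "M = mat (m + k) (m + k) (\<lambda>(i, j). if j < m then (if i = j then 1 else 0) else C $$ (i, j))"
  define C12 where "C12 = mat m k (\<lambda>(i, j). C $$ (i, m + j))"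
  define C22 where "C22 = mat k k (\<lambda>(i, j). C $$ (m + i, m + j))"
  define B11 where "B11 = mat m m (\<lambda>(i, j). B $$ (i, j))"
  define B21 where "B21 = mat k m (\<lambda>(i, j). B $$ (m + i, j))"
  have M_carrier: "M \<in> carrier_mat (m + k) (m + k)" by (simp add: M_def)
  have "M = four_block_mat (1\<^sub>m m) C12 (0\<^sub>m k m) C22"
    by (rule eq_matI) (auto simp: M_def C12_def C22_def)
  then have det_M: "det M = det C22"
    by (simp add: det_four_block_mat_lower_left_zero[of _ m _ k] C12_def C22_def)
  have "B * M = four_block_mat B11 (0\<^sub>m m k) B21 (c \<cdot>\<^sub>m 1\<^sub>m k)"
  proof (rule eq_matI)
    fix i j assume "i < dim_row (four_block_mat B11 (0\<^sub>m m k) B21 (c \<cdot>\<^sub>m 1\<^sub>m k))"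
      "j < dim_col (four_block_mat B11 (0\<^sub>m m k) B21 (c \<cdot>\<^sub>m 1\<^sub>m k))"
    then have i: "i < m + k" and j: "j < m + k" by (auto simp: B11_def)
    have "(B * M) $$ (i, j) = (\<Sum>l = 0..<m + k. B $$ (i, l) * M $$ (l, j))"
      using i j B M_carrier by (simp add: scalar_prod_def)
    also have "\<dots> = (if j < m then B $$ (i, j) else (B * C) $$ (i, j))"
      using i j B C by (auto simp: M_def scalar_prod_def if_distrib[where f="\<lambda>x. _ * x"] cong: if_cong)
    also have "\<dots> = four_block_mat B11 (0\<^sub>m m k) B21 (c \<cdot>\<^sub>m 1\<^sub>m k) $$ (i, j)"
      unfolding BC using i j by (auto simp: B11_def B21_def)
    finally show "(B * M) $$ (i, j) = four_block_mat B11 (0\<^sub>m m k) B21 (c \<cdot>\<^sub>m 1\<^sub>m k) $$ (i, j)" .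
  qed (use B M_carrier in \<open>auto simp: B11_def\<close>)
  then have "det B * det M = det (four_block_mat B11 (0\<^sub>m m k) B21 (c \<cdot>\<^sub>m 1\<^sub>m k))"
    using det_mult[OF B M_carrier] by simp
  also have "\<dots> = det B11 * det (c \<cdot>\<^sub>m 1\<^sub>m k)"
    by (rule det_four_block_mat_upper_right_zero) (auto simp: B11_def B21_def)
  finally show ?thesis using det_M by (simp add: C22_def B11_def)
qed

lemma const_poly_sum: "(\<Sum>l\<in>S. [:f l:]) = [:\<Sum>l\<in>S. f l:]"
  by (induct S rule: infinite_finite_induct) auto

lemma char_matrix_mult_cube_root:
  fixes A A2 :: "'a :: comm_ring_1 mat" and X :: "'a poly"
  assumes A: "A \<in> carrier_mat n n" and A2: "A2 \<in> carrier_mat n n"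
    and square: "A * A = A2" and cube: "A * A2 = 1\<^sub>m n"
  shows "(X \<cdot>\<^sub>m 1\<^sub>m n - map_mat (\<lambda>a. [:a:]) A)
       * ((X * X) \<cdot>\<^sub>m 1\<^sub>m n + X \<cdot>\<^sub>m map_mat (\<lambda>a. [:a:]) A + map_mat (\<lambda>a. [:a:]) A2)
       = (X * X * X - 1) \<cdot>\<^sub>m 1\<^sub>m n"
  (is "?B * ?C = _")
proof (rule eq_matI)
  fix i j assume "i < dim_row ((X * X * X - 1) \<cdot>\<^sub>m 1\<^sub>m n)" "j < dim_col ((X * X * X - 1) \<cdot>\<^sub>m 1\<^sub>m n)"
  then have i: "i < n" and j: "j < n" by auto
  have B: "?B $$ (i, l) = (if i = l then X else 0) - [:A $$ (i, l):]" if "l < n" for l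
    using i that A by simp
  have C: "?C $$ (l, j) = (if l = j then X * X else 0) + X * [:A $$ (l, j):] + [:A2 $$ (l, j):]"
    if "l < n" for l
    using j that A A2 by simp
  have AA: "(\<Sum>l = 0..<n. A $$ (i, l) * A $$ (l, j)) = A2 $$ (i, j)"
    using square[symmetric] i j A by (simp add: scalar_prod_def)
  have AA2: "(\<Sum>l = 0..<n. A $$ (i, l) * A2 $$ (l, j)) = (if i = j then 1 else 0)"
    using arg_cong[OF cube, of "\<lambda>M. M $$ (i, j)"] i j A A2 by (simp add: scalar_prod_def)
  have "(?B * ?C) $$ (i, j) = (\<Sum>l = 0..<n. ?B $$ (i, l) * ?C $$ (l, j))"
    using i j A A2 by (simp add: scalar_prod_def)
  also have "\<dots> = (\<Sum>l = 0..<n. (if i = l then X * ?C $$ (l, j) else 0)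
        - ((if l = j then X * X * [:A $$ (i, l):] else 0) + X * [:A $$ (i, l) * A $$ (l, j):]
           + [:A $$ (i, l) * A2 $$ (l, j):]))"
    by (intro sum.cong refl) (auto simp: B C algebra_simps)
  also have "\<dots> = X * ?C $$ (i, j) - (X * X * [:A $$ (i, j):]
        + X * [:\<Sum>l = 0..<n. A $$ (i, l) * A $$ (l, j):] + [:\<Sum>l = 0..<n. A $$ (i, l) * A2 $$ (l, j):])"
    using i j by (simp add: sum_subtractf sum.distrib sum_distrib_left[symmetric] const_poly_sum
        smult_sum)
  also have "\<dots> = ((X * X * X - 1) \<cdot>\<^sub>m 1\<^sub>m n) $$ (i, j)"
    unfolding AA AA2 using C[OF i] i j by (auto simp: algebra_simps one_pCons)
  finally show "(?B * ?C) $$ (i, j) = ((X * X * X - 1) \<cdot>\<^sub>m 1\<^sub>m n) $$ (i, j)" .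
qed (use A A2 in auto)

section \<open>The characteristic polynomial of the twisted Pascal matrix\<close>

lemma cube_minus_one_factor: "[:0, 1:] * [:0, 1:] * [:0, 1:] - 1 = cyclotomic1 * cyclotomic3"
  by (simp add: one_pCons)

definition twisted_char_mat :: "nat \<Rightarrow> int poly mat" where
  "twisted_char_mat n = [:0, 1:] \<cdot>\<^sub>m 1\<^sub>m n - map_mat (\<lambda>a. [:a:]) (twisted_pascal_mat n)"

definition twisted_cofactor_mat :: "nat \<Rightarrow> int poly mat" where
  "twisted_cofactor_mat n = ([:0, 1:] * [:0, 1:]) \<cdot>\<^sub>m 1\<^sub>m n
     + [:0, 1:] \<cdot>\<^sub>m map_mat (\<lambda>a. [:a:]) (twisted_pascal_mat n) + map_mat (\<lambda>a. [:a:]) (twisted_pascal_sq_mat n)"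

lemma twisted_char_mat_carrier [simp]: "twisted_char_mat n \<in> carrier_mat n n"
  by (auto simp: twisted_char_mat_def intro: minus_carrier_mat)

lemma twisted_cofactor_mat_carrier [simp]: "twisted_cofactor_mat n \<in> carrier_mat n n"
  by (simp add: twisted_cofactor_mat_def)

lemma det_twisted_char_mat: "det (twisted_char_mat n) = char_poly (twisted_pascal_mat n)"
  using char_poly_altdef[OF twisted_pascal_mat_carrier] by (simp add: twisted_char_mat_def)

lemma twisted_char_mat_mult_cofactor:
  "twisted_char_mat n * twisted_cofactor_mat n = (cyclotomic1 * cyclotomic3) \<cdot>\<^sub>m 1\<^sub>m n"
  unfolding twisted_char_mat_def twisted_cofactor_mat_def cube_minus_one_factor[symmetric]
  by (rule char_matrix_mult_cube_root) (simp_all add: twisted_pascal_mat_square twisted_pascal_mat_mult_sq)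

lemma char_poly_twisted_pascal_mat:
  assumes "0 < n"
  obtains x y where "char_poly (twisted_pascal_mat n) = cyclotomic1 ^ x * cyclotomic3 ^ y"
    and "3 * int y = int n - eps n" and "int x = int y + eps n"
proof -
  let ?A = "twisted_pascal_mat n"
  have "char_poly ?A * det (twisted_cofactor_mat n) = (cyclotomic1 * cyclotomic3) ^ n"
    unfolding det_twisted_char_mat[symmetric] twisted_char_mat_mult_cofactor
      det_mult[OF twisted_char_mat_carrier twisted_cofactor_mat_carrier, symmetric]
    by (simp only: det_smult det_one index_one_mat mult_1_right)
  then have dvd: "char_poly ?A dvd cyclotomic1 ^ n * cyclotomic3 ^ n"
    unfolding power_mult_distrib by (metis dvd_triv_left)
  have monic: "degree (char_poly ?A) = n" "monic (char_poly ?A)"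
    using degree_monic_char_poly[of ?A n] by auto
  obtain x y where xy: "char_poly ?A = cyclotomic1 ^ x * cyclotomic3 ^ y"
    by (rule monic_dvd_prime_powers[OF prime_cyclotomic1 _ prime_cyclotomic3 _ monic(2) dvd]) simp_all
  have deg: "x + 2 * y = n" using monic(1) xy degree_cyclotomic_powers by metis
  have "int y - int x = - eps n"
    using coeff_char_poly_pred_degree[of ?A n] coeff_cyclotomic_powers_pred_degree[of x y]
      twisted_pascal_mat_trace[of n] assms xy deg by simp
  with deg have "3 * int y = int n - eps n" "int x = int y + eps n" by linarith+
  with xy show thesis by (rule that)
qed

section \<open>Reduction modulo p\<close>

lemma leading_block_char_matrix_cong:
  assumes "prime p" "q = p ^ l" "m \<le> q"
  shows "[:int p:] dvd det (mat m m (\<lambda>(i, j). twisted_char_mat q $$ (i, j))) - chi m"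
  unfolding chi_def
proof (rule dvd_det_diff[of _ m])
  fix i j assume "i < m" "j < m"
  with assms(3) have ij: "i < m" "j < m" "i < q" "j < q" by auto
  then have "int p dvd int ((i + j) choose i) - twisted_pascal_mat q $$ (i, j)"
    using twisted_pascal_mat_cong[OF assms(1,2), of i j] assms(3)
    by (simp add: cong_iff_dvd_diff dvd_diff_commute)
  then show "[:int p:] dvd mat m m (\<lambda>(i, j). twisted_char_mat q $$ (i, j)) $$ (i, j)
      - ([:0, 1:] \<cdot>\<^sub>m 1\<^sub>m m - map_mat (\<lambda>a. [:a:]) (Pmat m)) $$ (i, j)"
    using ij by (auto simp: Pmat_def twisted_char_mat_def diff_pCons)
qed (auto simp: Pmat_def intro: minus_carrier_mat)

text \<open>For 2k \<le> q the trailing k x k block of A(q) vanishes and, read backwards, that of A(q)^2 is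
  P(k) modulo p.\<close>

lemma trailing_block_cofactor_cong:
  assumes "prime p" "q = p ^ l" "2 * k \<le> q"
  shows "[:int p:] dvd det (mat k k (\<lambda>(i, j). twisted_cofactor_mat q $$ (q - k + i, q - k + j))) - Dpoly k"
proof -
  define r where "r = (\<lambda>i. if i < k then k - 1 - i else i)"
  let ?C22 = "mat k k (\<lambda>(i, j). twisted_cofactor_mat q $$ (q - k + i, q - k + j))"
  have "det (mat k k (\<lambda>(i, j). ?C22 $$ (r i, r j))) = det ?C22"
    unfolding r_def by (rule det_permute_rows_cols[OF _ reverse_permutes]) simp
  moreover have "[:int p:] dvd det (mat k k (\<lambda>(i, j). ?C22 $$ (r i, r j))) - Dpoly k"
    unfolding Dpoly_def
  proof (rule dvd_det_diff[of _ k])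
    fix i j assume ij: "i < k" "j < k"
    have rev: "q - k + r i = q - 1 - i" "q - k + r j = q - 1 - j" "r i < k" "r j < k"
      using ij assms(3) by (auto simp: r_def)
    have "int p dvd twisted_pascal_sq_mat q $$ (q - 1 - i, q - 1 - j) - int ((i + j) choose i)"
      using twisted_pascal_mat_cong[OF assms(1,2), of i j] twisted_pascal_sq_mat_reverse[of i q j]
        ij assms(3) by (simp add: cong_iff_dvd_diff)
    then show "[:int p:] dvd mat k k (\<lambda>(i, j). ?C22 $$ (r i, r j)) $$ (i, j)
        - ([:0, 0, 1:] \<cdot>\<^sub>m 1\<^sub>m k + map_mat (\<lambda>a. [:a:]) (Pmat k)) $$ (i, j)"
      using ij rev assms(3) twisted_pascal_mat_lower_right_zero[OF assms(3) ij]
      by (auto simp: twisted_cofactor_mat_def Pmat_def)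
  qed (simp_all add: Pmat_def)
  ultimately show ?thesis by simp
qed

lemma char_poly_twisted_pascal_mat_Dpoly_cong:
  assumes "prime p" "q = p ^ l" "2 * k \<le> q"
  shows "[:int p:] dvd char_poly (twisted_pascal_mat q) * Dpoly k
                       - chi (q - k) * (cyclotomic1 * cyclotomic3) ^ k"
proof -
  define B11 where "B11 = mat (q - k) (q - k) (\<lambda>(i, j). twisted_char_mat q $$ (i, j))"
  define C22 where "C22 = mat k k (\<lambda>(i, j). twisted_cofactor_mat q $$ (q - k + i, q - k + j))"
  have q: "q - k + k = q" using assms(3) by simp
  have "twisted_char_mat q \<in> carrier_mat (q - k + k) (q - k + k)"
    "twisted_cofactor_mat q \<in> carrier_mat (q - k + k) (q - k + k)"
    "twisted_char_mat q * twisted_cofactor_mat q = (cyclotomic1 * cyclotomic3) \<cdot>\<^sub>m 1\<^sub>m (q - k + k)"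
    unfolding q by (simp_all only: twisted_char_mat_carrier twisted_cofactor_mat_carrier
        twisted_char_mat_mult_cofactor)
  then have jacobi: "char_poly (twisted_pascal_mat q) * det C22 = det B11 * (cyclotomic1 * cyclotomic3) ^ k"
    unfolding B11_def C22_def det_twisted_char_mat[symmetric] by (rule jacobi_complementary_minor)
  have "char_poly (twisted_pascal_mat q) * Dpoly k - chi (q - k) * (cyclotomic1 * cyclotomic3) ^ k
      = (det B11 - chi (q - k)) * (cyclotomic1 * cyclotomic3) ^ k
        - char_poly (twisted_pascal_mat q) * (det C22 - Dpoly k)"
    using jacobi by (simp add: algebra_simps)
  moreover have "[:int p:] dvd det B11 - chi (q - k)"
    unfolding B11_def by (rule leading_block_char_matrix_cong[OF assms(1,2)]) simp
  moreover have "[:int p:] dvd det C22 - Dpoly k"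
    unfolding C22_def by (rule trailing_block_cofactor_cong[OF assms])
  ultimately show ?thesis by simp
qed

theorem theorem1p3:
  fixes p l q k :: nat
  assumes "prime p" and "q = p ^ l" and "2 * k \<le> q"
  defines "a \<equiv> (int q - eps q) div 3 - int k"
      and "b \<equiv> (int q + 2 * eps q) div 3 - int k"
  shows "\<forall>i. [coeff (chi (q - k) * [:1, 1, 1:] ^ nat (- a) * [:-1, 1:] ^ nat (- b)) i
              = coeff ([:1, 1, 1:] ^ nat a * [:-1, 1:] ^ nat b * Dpoly k) i] (mod int p)"
proof -
  have "0 < q" using assms(1,2) by (simp add: prime_gt_0_nat)
  then obtain x y where xy: "char_poly (twisted_pascal_mat q) = cyclotomic1 ^ x * cyclotomic3 ^ y"
    and y: "3 * int y = int q - eps q" and x: "int x = int y + eps q"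
    by (rule char_poly_twisted_pascal_mat)
  have "int q - eps q = 3 * int y" "int q + 2 * eps q = 3 * int x" using x y by linarith+
  then have ab: "a = int y - int k" "b = int x - int k"
    unfolding a_def b_def by simp_all
  have "[:int p:] dvd cyclotomic1 ^ x * cyclotomic3 ^ y * Dpoly k - chi (q - k) * (cyclotomic1 * cyclotomic3) ^ k"
    using char_poly_twisted_pascal_mat_Dpoly_cong[OF assms(1-3)] xy by simp
  then have "[:int p:] dvd chi (q - k) * cyclotomic3 ^ nat (- a) * cyclotomic1 ^ nat (- b)
                          - cyclotomic3 ^ nat a * cyclotomic1 ^ nat b * Dpoly k"
    unfolding ab minus_diff_eq by (rule const_poly_dvd_cancel_common_powers[rotated 2]) simp_all
  then show ?thesis by (simp add: const_poly_dvd_iff cong_iff_dvd_diff)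
qed

end
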